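(* Let $k\ge2$ be an integer and $\lambda$ a real number with $0<\lambda<\frac{2}{k+1}$. Then the Poisson distribution of order $k$ with parameter $\lambda$ has the unique mode $0$, i.e. $f_k(0;\lambda)>f_k(n;\lambda)$ for every integer $n\ge1$.
   Context: For an integer $k\ge1$ and a real $\lambda>0$, the Poisson distribution of order $k$ with parameter $\lambda$ is the distribution on $\{0,1,2,\dots\}$ with probability mass function $$f_k(n;\lambda)=e^{-k\lambda}\sum_{\substack{n_1,\dots,n_k\ge 0\\ n_1+2n_2+\dots+kn_k=n}}\frac{\lambda^{n_1+\dots+n_k}}{n_1!\cdots n_k!},\qquad n=0,1,2,\dots$$ A mode is any $n$ at which $f_k(n;\lambda)$ attains its global maximum over $n\ge0$. *)

theory Defs
  imports Complex_Main
begin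

text \<open>Index tuples (n_1,...,n_k) represented as functions nat => nat supported on {1..k},
  with n_1 + 2 n_2 + ... + k n_k = n.\<close>
definition poisson_k_tuples :: "nat \<Rightarrow> nat \<Rightarrow> (nat \<Rightarrow> nat) set" where
  "poisson_k_tuples k n =
     {ns. (\<forall>i. i \<notin> {1..k} \<longrightarrow> ns i = 0) \<and> (\<Sum>i\<in>{1..k}. i * ns i) = n}"

definition poisson_k_pmf :: "nat \<Rightarrow> real \<Rightarrow> nat \<Rightarrow> real" where
  "poisson_k_pmf k lam n =
     exp (- (real k * lam)) *
     (\<Sum>ns\<in>poisson_k_tuples k n.
        lam ^ (\<Sum>i\<in>{1..k}. ns i) / (\<Prod>i\<in>{1..k}. fact (ns i)))"

end

theory Submission
  imports Defs
begin

text \<open>Up to the factor exp(-k lam), the pmf at n is the coefficient c(n) of x^n in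
  exp(lam (x + x^2 + ... + x^k)), and c(0) = 1. Differentiating the generating function, or
  combinatorially removing one part of size j from each tuple, gives the recurrence
  n c(n) = lam * sum_{j=1..min k n} j c(n - j). By strong induction all earlier coefficients
  are at most 1, so n c(n) <= lam m (m + 1) / 2 <= n lam (k + 1) / 2 < n with m = min k n,
  i.e. c(n) < 1 = c(0) for n >= 1.\<close>

definition poisson_k_weight :: "nat \<Rightarrow> real \<Rightarrow> (nat \<Rightarrow> nat) \<Rightarrow> real" where
  "poisson_k_weight k lam ns = lam ^ (\<Sum>i\<in>{1..k}. ns i) / (\<Prod>i\<in>{1..k}. fact (ns i))"

definition poisson_k_coeff :: "nat \<Rightarrow> real \<Rightarrow> nat \<Rightarrow> real" where
  "poisson_k_coeff k lam n = (\<Sum>ns\<in>poisson_k_tuples k n. poisson_k_weight k lam ns)"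

lemma poisson_k_pmf_eq_coeff:
  "poisson_k_pmf k lam n = exp (- (real k * lam)) * poisson_k_coeff k lam n"
  unfolding poisson_k_pmf_def poisson_k_coeff_def poisson_k_weight_def by simp

lemma poisson_k_tuples_term_le:
  assumes "ns \<in> poisson_k_tuples k n" and "i \<in> {1..k}"
  shows "i * ns i \<le> n"
proof -
  have "i * ns i \<le> (\<Sum>i\<in>{1..k}. i * ns i)"
    by (rule member_le_sum) (use assms in auto)
  with assms(1) show ?thesis
    unfolding poisson_k_tuples_def by simp
qed

lemma finite_poisson_k_tuples: "finite (poisson_k_tuples k n)"
proof (rule finite_subset)
  show "poisson_k_tuples k n \<subseteq>
          {f. \<forall>x. (x \<in> {1..k} \<longrightarrow> f x \<in> {0..n}) \<and> (x \<notin> {1..k} \<longrightarrow> f x = 0)}"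
  proof safe
    fix ns x assume ns: "ns \<in> poisson_k_tuples k n"
    show "ns x \<in> {0..n}" if "x \<in> {1..k}"
    proof -
      have "ns x \<le> x * ns x"
        using that by simp
      also have "\<dots> \<le> n"
        by (rule poisson_k_tuples_term_le[OF ns that])
      finally show ?thesis by simp
    qed
    show "ns x = 0" if "x \<notin> {1..k}"
      using ns that unfolding poisson_k_tuples_def by blast
  qed
qed (rule finite_set_of_finite_funs; simp)

lemma poisson_k_tuples_0: "poisson_k_tuples k 0 = {\<lambda>_. 0}"
proof (intro equalityI subsetI)
  fix ns assume ns: "ns \<in> poisson_k_tuples k 0"
  have "ns i = 0" for i
    using poisson_k_tuples_term_le[OF ns, of i] ns unfolding poisson_k_tuples_def
    by (cases "i \<in> {1..k}") auto
  then show "ns \<in> {\<lambda>_. 0}" by auto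
qed (simp add: poisson_k_tuples_def)

lemma poisson_k_coeff_0: "poisson_k_coeff k lam 0 = 1"
  by (simp add: poisson_k_coeff_def poisson_k_weight_def poisson_k_tuples_0)

lemma sum_fun_upd:
  assumes "finite A" and "j \<in> A"
  shows "(\<Sum>i\<in>A. g i ((f(j := v)) i)) = g j v + (\<Sum>i\<in>A - {j}. g i (f i))"
  using assms by (simp add: sum.remove)

lemma prod_fun_upd:
  assumes "finite A" and "j \<in> A"
  shows "(\<Prod>i\<in>A. g i ((f(j := v)) i)) = g j v * (\<Prod>i\<in>A - {j}. g i (f i))"
  using assms by (simp add: prod.remove)

lemma weighted_sum_fun_upd:
  fixes ns :: "nat \<Rightarrow> nat"
  assumes "j \<in> {1..k}"
  shows "(\<Sum>i\<in>{1..k}. i * (ns(j := v)) i) + j * ns j = (\<Sum>i\<in>{1..k}. i * ns i) + j * v"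
  using sum_fun_upd[OF finite_atLeastAtMost assms, of "\<lambda>i x. i * x" ns v]
    sum.remove[OF finite_atLeastAtMost assms, of "\<lambda>i. i * ns i"]
  by simp

lemma poisson_k_tuples_incr_bij:
  assumes j: "j \<in> {1..k}" and "j \<le> n"
  shows "bij_betw (\<lambda>ns. ns(j := Suc (ns j)))
           (poisson_k_tuples k (n - j)) {ns \<in> poisson_k_tuples k n. ns j \<noteq> 0}"
proof (rule bij_betw_byWitness[where f' = "\<lambda>ns. ns(j := ns j - 1)"])
  show "(\<lambda>ns. ns(j := Suc (ns j))) ` poisson_k_tuples k (n - j)
          \<subseteq> {ns \<in> poisson_k_tuples k n. ns j \<noteq> 0}"
  proof (rule image_subsetI)
    fix ns assume ns: "ns \<in> poisson_k_tuples k (n - j)"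
    then show "ns(j := Suc (ns j)) \<in> {ns \<in> poisson_k_tuples k n. ns j \<noteq> 0}"
      using weighted_sum_fun_upd[OF j, of ns "Suc (ns j)"] j \<open>j \<le> n\<close>
      by (auto simp: poisson_k_tuples_def)
  qed
  show "(\<lambda>ns. ns(j := ns j - 1)) ` {ns \<in> poisson_k_tuples k n. ns j \<noteq> 0}
          \<subseteq> poisson_k_tuples k (n - j)"
  proof (rule image_subsetI)
    fix ns assume "ns \<in> {ns \<in> poisson_k_tuples k n. ns j \<noteq> 0}"
    then have ns: "ns \<in> poisson_k_tuples k n" "ns j \<noteq> 0" by auto
    have "j * (ns j - 1) + j = j * ns j"
      using ns(2) by (cases "ns j") auto
    then show "ns(j := ns j - 1) \<in> poisson_k_tuples k (n - j)"
      using weighted_sum_fun_upd[OF j, of ns "ns j - 1"] ns j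
      by (auto simp: poisson_k_tuples_def)
  qed
qed auto

lemma poisson_k_weight_incr:
  assumes j: "j \<in> {1..k}"
  shows "real (Suc (ns j)) * poisson_k_weight k lam (ns(j := Suc (ns j)))
           = lam * poisson_k_weight k lam ns"
proof -
  define s where "s = (\<Sum>i\<in>{1..k} - {j}. ns i)"
  define P where "P = (\<Prod>i\<in>{1..k} - {j}. (fact (ns i) :: real))"
  have "P > 0"
    unfolding P_def by (rule prod_pos) auto
  have "(\<Sum>i\<in>{1..k}. (ns(j := Suc (ns j))) i) = Suc (ns j + s)"
    using sum_fun_upd[OF finite_atLeastAtMost j, of "\<lambda>i x. x" ns] by (simp add: s_def)
  moreover have "(\<Sum>i\<in>{1..k}. ns i) = ns j + s"
    using j by (simp add: s_def sum.remove)
  moreover have "(\<Prod>i\<in>{1..k}. (fact ((ns(j := Suc (ns j))) i) :: real)) = fact (Suc (ns j)) * P"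
    using prod_fun_upd[OF finite_atLeastAtMost j, of "\<lambda>i x. (fact x :: real)" ns]
    by (simp add: P_def)
  moreover have "(\<Prod>i\<in>{1..k}. (fact (ns i) :: real)) = fact (ns j) * P"
    using j by (simp add: P_def prod.remove)
  ultimately show ?thesis
    using \<open>P > 0\<close> by (simp add: poisson_k_weight_def field_simps del: of_nat_Suc)
qed

lemma sum_count_poisson_k_weight:
  assumes j: "j \<in> {1..k}" and "j \<le> n"
  shows "(\<Sum>ns\<in>poisson_k_tuples k n. real (ns j) * poisson_k_weight k lam ns)
           = lam * poisson_k_coeff k lam (n - j)"
proof -
  have "(\<Sum>ns\<in>poisson_k_tuples k n. real (ns j) * poisson_k_weight k lam ns)
      = (\<Sum>ns\<in>{ns \<in> poisson_k_tuples k n. ns j \<noteq> 0}. real (ns j) * poisson_k_weight k lam ns)"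
    by (rule sum.mono_neutral_right) (auto simp: finite_poisson_k_tuples)
  also have "\<dots> = (\<Sum>ns\<in>poisson_k_tuples k (n - j).
                     real (Suc (ns j)) * poisson_k_weight k lam (ns(j := Suc (ns j))))"
    using sum.reindex_bij_betw[OF poisson_k_tuples_incr_bij[OF assms],
        of "\<lambda>ns. real (ns j) * poisson_k_weight k lam ns"]
    by simp
  also have "\<dots> = lam * poisson_k_coeff k lam (n - j)"
    using poisson_k_weight_incr[OF j]
    by (simp add: poisson_k_coeff_def sum_distrib_left del: of_nat_Suc)
  finally show ?thesis .
qed

lemma poisson_k_tuples_eq_0:
  assumes "ns \<in> poisson_k_tuples k n" and "n < j"
  shows "ns j = 0"
proof (cases "j \<in> {1..k}")
  case True
  show ?thesis
  proof (rule ccontr)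
    assume "ns j \<noteq> 0"
    then have "j \<le> j * ns j" by simp
    with poisson_k_tuples_term_le[OF assms(1) True] assms(2) show False by linarith
  qed
next
  case False
  with assms(1) show ?thesis
    unfolding poisson_k_tuples_def by blast
qed

lemma poisson_k_coeff_recurrence:
  "real n * poisson_k_coeff k lam n
     = lam * (\<Sum>j\<in>{1..min k n}. real j * poisson_k_coeff k lam (n - j))"
proof -
  let ?T = "poisson_k_tuples k n" and ?w = "poisson_k_weight k lam"
  have "real n * poisson_k_coeff k lam n = (\<Sum>ns\<in>?T. real n * ?w ns)"
    by (simp add: poisson_k_coeff_def sum_distrib_left)
  also have "\<dots> = (\<Sum>ns\<in>?T. \<Sum>j\<in>{1..k}. real j * (real (ns j) * ?w ns))"
  proof (rule sum.cong[OF refl])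
    fix ns assume "ns \<in> ?T"
    then have "real n = (\<Sum>j\<in>{1..k}. real j * real (ns j))"
      unfolding poisson_k_tuples_def by (simp flip: of_nat_mult of_nat_sum)
    then show "real n * ?w ns = (\<Sum>j\<in>{1..k}. real j * (real (ns j) * ?w ns))"
      by (simp add: sum_distrib_right mult.assoc)
  qed
  also have "\<dots> = (\<Sum>j\<in>{1..k}. real j * (\<Sum>ns\<in>?T. real (ns j) * ?w ns))"
    by (subst sum.swap) (simp add: sum_distrib_left)
  also have "\<dots> = (\<Sum>j\<in>{1..min k n}. real j * (\<Sum>ns\<in>?T. real (ns j) * ?w ns))"
    by (rule sum.mono_neutral_right) (auto simp: poisson_k_tuples_eq_0)
  also have "\<dots> = lam * (\<Sum>j\<in>{1..min k n}. real j * poisson_k_coeff k lam (n - j))"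
    by (simp add: sum_count_poisson_k_weight sum_distrib_left mult.left_commute)
  finally show ?thesis .
qed

lemma poisson_k_coeff_lt_1:
  assumes "0 \<le> lam" and "lam * (real k + 1) < 2" and "1 \<le> n"
  shows "poisson_k_coeff k lam n < 1"
  using \<open>1 \<le> n\<close>
proof (induction n rule: less_induct)
  case (less n)
  have coeff_le_1: "poisson_k_coeff k lam i \<le> 1" if "i < n" for i
    using less.IH[OF that] poisson_k_coeff_0 by (cases "i = 0") auto
  define m where "m = min k n"
  have "real n * poisson_k_coeff k lam n
          = lam * (\<Sum>j\<in>{1..m}. real j * poisson_k_coeff k lam (n - j))"
    unfolding m_def by (rule poisson_k_coeff_recurrence)
  also have "\<dots> \<le> lam * (\<Sum>j\<in>{1..m}. real j)"
    using less.prems \<open>0 \<le> lam\<close>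
    by (intro mult_left_mono sum_mono mult_left_le coeff_le_1) (auto simp: m_def)
  also have "\<dots> = lam * (real m * (real m + 1)) / 2"
    using double_gauss_sum_from_Suc_0[of m, where 'a = real] by simp
  also have "\<dots> \<le> lam * (real n * (real k + 1)) / 2"
    using \<open>0 \<le> lam\<close> by (intro divide_right_mono mult_left_mono mult_mono) (auto simp: m_def)
  also have "\<dots> < real n"
    using mult_strict_left_mono[OF assms(2), of "real n"] less.prems by (simp add: algebra_simps)
  finally show ?case
    using less.prems by simp
qed

theorem mainTheorem3:
  fixes k :: nat and lam :: real
  assumes "k \<ge> 2" and "0 < lam" and "lam < 2 / (real k + 1)"
  shows "\<forall>n::nat. n \<ge> 1 \<longrightarrow> poisson_k_pmf k lam 0 > poisson_k_pmf k lam n"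
proof (intro allI impI)
  fix n :: nat assume "n \<ge> 1"
  have "lam * (real k + 1) < 2"
    using assms(3) by (simp add: field_simps)
  with \<open>0 < lam\<close> \<open>n \<ge> 1\<close> have "poisson_k_coeff k lam n < 1"
    by (intro poisson_k_coeff_lt_1) auto
  then show "poisson_k_pmf k lam 0 > poisson_k_pmf k lam n"
    by (simp add: poisson_k_pmf_eq_coeff poisson_k_coeff_0)
qed

end
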